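(* (1) $I$ is a closed (two-sided) ideal in $A^\mathcal U$ (and $I\subseteq A^{c\mathcal U}$). (2) The $\mathrm{C}^*$-algebra $A^{c\mathcal U}/I$ is unital. (3) The map $q\circ\Delta:A\to A^{c\mathcal U}/I$ is injective, where $q:A^{c\mathcal U}\to A^{c\mathcal U}/I$ is the quotient map and $\Delta(a)=(a,a,\dots)^\bullet$ is the diagonal embedding. (4) $(q\circ\Delta)(A)$ is an essential ideal in $A^{c\mathcal U}/I$.
   Context: $X$ is a second countable, locally compact space with basepoint $o$ and a fixed compatible proper metric $d$; $B(r)$ is the closed ball of radius $r$ about $o$. $A=C_0(X)$. $\mathcal U$ is a nonprincipal ultrafilter on $\mathbb N$, and $A^\mathcal U=\ell^\infty(A)/\{(f_n):\lim_{n,\mathcal U}\|f_n\|=0\}$ is the ultrapower, with $(f_n)^\bullet$ the class of $(f_n)$. A sequence $(f_n)\in\ell^\infty(A)$ is $\mathcal U$-equicontinuous on bounded sets if for every $r,\epsilon>0$ there is $\delta>0$ such that for a set of $n$ belonging to $\mathcal U$, $|f_n(s)-f_n(t)|\le\epsilon$ for all $s,t\in B(r)$ with $d(s,t)<\delta$; $A^{c\mathcal U}$ is the $\mathrm{C}^*$-subalgebra of $A^\mathcal U$ consisting of classes of such sequences. $I:=\{(f_n)^\bullet\in A^\mathcal U:\exists r_n\in\mathbb R \text{ with } \lim_{n,\mathcal U}r_n=+\infty \text{ and } f_n|_{B(r_n)}\equiv 0\text{ for all } n\}$. An ideal $J$ in a $\mathrm{C}^*$-algebra $C$ is essential if $cJ=0$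 implies $c=0$ for $c\in C$. *)

theory Defs
  imports "HOL-Analysis.Analysis"
begin

definition nonprincipal_ultrafilter :: "nat filter \<Rightarrow> bool" where
  "nonprincipal_ultrafilter U \<longleftrightarrow> U \<noteq> bot \<and>
     (\<forall>P. eventually P U \<or> eventually (\<lambda>n. \<not> P n) U) \<and>
     (\<forall>k. eventually (\<lambda>n. n \<noteq> k) U)"

text \<open>A = C_0(X): continuous complex functions vanishing at infinity.\<close>
definition C0 :: "('a::topological_space \<Rightarrow> complex) set" where
  "C0 = {f. continuous_on UNIV f \<and>
           (\<forall>e>0. \<exists>K. compact K \<and> (\<forall>x. x \<notin> K \<longrightarrow> cmod (f x) < e))}"

definition supn :: "('a \<Rightarrow> complex) \<Rightarrow> real" where
  "supn f = (SUP x. cmod (f x))"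

text \<open>Sequences in ell-infinity(A) (representatives of elements of the ultrapower).\<close>
definition linf :: "(nat \<Rightarrow> 'a::topological_space \<Rightarrow> complex) \<Rightarrow> bool" where
  "linf F \<longleftrightarrow> (\<forall>n. F n \<in> C0) \<and> (\<exists>M. \<forall>n. supn (F n) \<le> M)"

definition seq_add :: "(nat \<Rightarrow> 'a \<Rightarrow> complex) \<Rightarrow> (nat \<Rightarrow> 'a \<Rightarrow> complex) \<Rightarrow> nat \<Rightarrow> 'a \<Rightarrow> complex" where
  "seq_add F G = (\<lambda>n x. F n x + G n x)"
definition seq_diff :: "(nat \<Rightarrow> 'a \<Rightarrow> complex) \<Rightarrow> (nat \<Rightarrow> 'a \<Rightarrow> complex) \<Rightarrow> nat \<Rightarrow> 'a \<Rightarrow> complex" where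
  "seq_diff F G = (\<lambda>n x. F n x - G n x)"
definition seq_mult :: "(nat \<Rightarrow> 'a \<Rightarrow> complex) \<Rightarrow> (nat \<Rightarrow> 'a \<Rightarrow> complex) \<Rightarrow> nat \<Rightarrow> 'a \<Rightarrow> complex" where
  "seq_mult F G = (\<lambda>n x. F n x * G n x)"
definition seq_scale :: "complex \<Rightarrow> (nat \<Rightarrow> 'a \<Rightarrow> complex) \<Rightarrow> nat \<Rightarrow> 'a \<Rightarrow> complex" where
  "seq_scale c F = (\<lambda>n x. c * F n x)"
definition seq_zero :: "nat \<Rightarrow> 'a \<Rightarrow> complex" where
  "seq_zero = (\<lambda>n x. 0)"

definition diag :: "('a \<Rightarrow> complex) \<Rightarrow> nat \<Rightarrow> 'a \<Rightarrow> complex" where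
  "diag a = (\<lambda>n. a)"

text \<open>Two representatives define the same class of the ultrapower.\<close>
definition uequiv :: "nat filter \<Rightarrow> (nat \<Rightarrow> 'a \<Rightarrow> complex) \<Rightarrow> (nat \<Rightarrow> 'a \<Rightarrow> complex) \<Rightarrow> bool" where
  "uequiv U F G \<longleftrightarrow> ((\<lambda>n. supn (\<lambda>x. F n x - G n x)) \<longlongrightarrow> 0) U"

definition ueqc :: "nat filter \<Rightarrow> 'a::metric_space \<Rightarrow> (nat \<Rightarrow> 'a \<Rightarrow> complex) \<Rightarrow> bool" where
  "ueqc U x0 F \<longleftrightarrow> (\<forall>r>0. \<forall>e>0. \<exists>d>0. eventually (\<lambda>n. \<forall>s\<in>cball x0 r. \<forall>t\<in>cball x0 r.
        dist s t < d \<longrightarrow> cmod (F n s - F n t) \<le> e) U)"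

text \<open>F represents an element of A^{cU}: its class contains a U-equicontinuous sequence.\<close>
definition in_AcU :: "nat filter \<Rightarrow> 'a::metric_space \<Rightarrow> (nat \<Rightarrow> 'a \<Rightarrow> complex) \<Rightarrow> bool" where
  "in_AcU U x0 F \<longleftrightarrow> linf F \<and> (\<exists>G. linf G \<and> uequiv U F G \<and> ueqc U x0 G)"

text \<open>F represents an element of I: its class contains a sequence vanishing on B(r_n), r_n \<rightarrow> \<infinity> along U.\<close>
definition in_I :: "nat filter \<Rightarrow> 'a::metric_space \<Rightarrow> (nat \<Rightarrow> 'a \<Rightarrow> complex) \<Rightarrow> bool" where
  "in_I U x0 F \<longleftrightarrow> linf F \<and> (\<exists>G. linf G \<and> uequiv U F G \<and>
      (\<exists>r :: nat \<Rightarrow> real. filterlim r at_top U \<and> (\<forall>n. \<forall>x\<in>cball x0 (r n). G n x = 0)))"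

end

(*
  A bounded sequence lies in I exactly when it tends to 0 uniformly on every ball along U:
  given such a sequence, cut f_n off outside a ball whose radius grows along U slowly enough
  for f_n to be uniformly small on it.  With this description I is visibly a closed ideal of
  A^U contained in A^{cU}, cutoffs equal to 1 on B(n) give a unit of A^{cU} modulo I, and
  Delta is injective because a constant sequence that is locally small along U vanishes.

  A bounded U-equicontinuous sequence (f_n) has a pointwise U-limit g, since bounded complex
  sequences converge along an ultrafilter; equicontinuity makes the convergence uniform on the
  compact balls, so g is continuous and bounded and f_n a = g a modulo I for every a in A.
  Hence Delta(A) is an ideal in A^{cU}/I.  It is essential: if f Delta(a) lies in I for all a,
  taking for a a cutoff equal to 1 on B(r) shows that f_n is small on B(r) along U.
*)

theory Submission
  imports Defs
begin

section \<open>Functions vanishing at infinity and bounded sequences\<close>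

lemma C0_continuous: "f \<in> C0 \<Longrightarrow> continuous_on UNIV f"
  unfolding C0_def by simp

lemma C0_vanishing:
  assumes "f \<in> C0" "e > 0"
  obtains K where "compact K" "\<And>x. x \<notin> K \<Longrightarrow> cmod (f x) < e"
  using assms unfolding C0_def by blast

lemma C0_bounded:
  assumes "f \<in> C0"
  obtains B where "\<And>x. cmod (f x) \<le> B"
proof -
  obtain K where K: "compact K" "\<And>x. x \<notin> K \<Longrightarrow> cmod (f x) < 1"
    using C0_vanishing[OF assms zero_less_one] by blast
  have "compact (f ` K)"
    using K(1) C0_continuous[OF assms] by (blast intro: compact_continuous_image continuous_on_subset)
  then obtain B where "\<forall>y\<in>f ` K. norm y \<le> B"
    by (meson bounded_iff compact_imp_bounded)
  then have "cmod (f x) \<le> max B 1" for x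
    using K(2)[of x] by (cases "x \<in> K") fastforce+
  then show thesis by (rule that)
qed

lemma C0_mult_bounded_continuous:
  assumes "f \<in> C0" "continuous_on UNIV g" "\<And>x. cmod (g x) \<le> M"
  shows "(\<lambda>x. f x * g x) \<in> C0"
proof -
  have "\<exists>K. compact K \<and> (\<forall>x. x \<notin> K \<longrightarrow> cmod (f x * g x) < e)" if "e > 0" for e
  proof -
    have "e / (\<bar>M\<bar> + 1) > 0"
      using \<open>e > 0\<close> by simp
    then obtain K where K: "compact K" "\<And>x. x \<notin> K \<Longrightarrow> cmod (f x) < e / (\<bar>M\<bar> + 1)"
      using C0_vanishing[OF assms(1)] by blast
    have "cmod (f x * g x) < e" if "x \<notin> K" for x
    proof -
      have "cmod (f x * g x) \<le> cmod (f x) * (\<bar>M\<bar> + 1)"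
        unfolding norm_mult using assms(3)[of x] by (intro mult_left_mono) auto
      also have "\<dots> < e"
        using K(2) that by (simp add: pos_less_divide_eq)
      finally show ?thesis .
    qed
    with K(1) show ?thesis by blast
  qed
  moreover have "continuous_on UNIV (\<lambda>x. f x * g x)"
    using C0_continuous[OF assms(1)] assms(2) by (intro continuous_intros)
  ultimately show ?thesis
    unfolding C0_def by blast
qed

lemma C0_const_mult: "f \<in> C0 \<Longrightarrow> (\<lambda>x. c * f x) \<in> C0"
  using C0_mult_bounded_continuous[of f "\<lambda>_. c" "cmod c"] by (simp add: mult.commute)

lemma C0_add:
  assumes "f \<in> C0" "g \<in> C0"
  shows "(\<lambda>x. f x + g x) \<in> C0"
proof -
  have "\<exists>K. compact K \<and> (\<forall>x. x \<notin> K \<longrightarrow> cmod (f x + g x) < e)" if "e > 0" for e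
  proof -
    obtain K1 K2 where "compact K1" "\<And>x. x \<notin> K1 \<Longrightarrow> cmod (f x) < e/2"
      and "compact K2" "\<And>x. x \<notin> K2 \<Longrightarrow> cmod (g x) < e/2"
      using C0_vanishing[OF assms(1)] C0_vanishing[OF assms(2)] \<open>e > 0\<close> half_gt_zero by metis
    moreover have "cmod (f x + g x) \<le> cmod (f x) + cmod (g x)" for x
      by (rule norm_triangle_ineq)
    ultimately show ?thesis
      by (intro exI[of _ "K1 \<union> K2"]) (fastforce intro: order.strict_trans1)
  qed
  moreover have "continuous_on UNIV (\<lambda>x. f x + g x)"
    using assms by (intro continuous_intros C0_continuous)
  ultimately show ?thesis
    unfolding C0_def by blast
qed

lemma C0_diff: "f \<in> C0 \<Longrightarrow> g \<in> C0 \<Longrightarrow> (\<lambda>x. f x - g x) \<in> C0"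
  using C0_add[of f "\<lambda>x. -1 * g x"] C0_const_mult[of g "-1"] by simp

lemma C0_zero: "(\<lambda>x. 0) \<in> C0"
  unfolding C0_def by auto

lemma norm_le_supn: "(\<And>x. cmod (f x) \<le> B) \<Longrightarrow> cmod (f x) \<le> supn f"
  unfolding supn_def by (rule cSUP_upper) (auto intro!: bdd_aboveI2)

lemma supn_le: "(\<And>x. cmod (f x) \<le> B) \<Longrightarrow> supn f \<le> B"
  unfolding supn_def by (rule cSUP_least) auto

lemma linf_iff_bounded: "linf F \<longleftrightarrow> (\<forall>n. F n \<in> C0) \<and> (\<exists>M. \<forall>n x. cmod (F n x) \<le> M)"
proof
  assume "linf F"
  then obtain M where M: "\<And>n. supn (F n) \<le> M" and C0: "\<And>n. F n \<in> C0"
    unfolding linf_def by blast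
  have "cmod (F n x) \<le> M" for n x
  proof -
    obtain B where "\<And>x. cmod (F n x) \<le> B"
      using C0_bounded[OF C0] by blast
    then have "cmod (F n x) \<le> supn (F n)"
      by (rule norm_le_supn)
    with M[of n] show ?thesis
      by linarith
  qed
  with C0 show "(\<forall>n. F n \<in> C0) \<and> (\<exists>M. \<forall>n x. cmod (F n x) \<le> M)"
    by blast
next
  assume "(\<forall>n. F n \<in> C0) \<and> (\<exists>M. \<forall>n x. cmod (F n x) \<le> M)"
  then obtain M where "\<And>n. F n \<in> C0" "\<And>n x. cmod (F n x) \<le> M"
    by blast
  then show "linf F"
    unfolding linf_def by (blast intro: supn_le)
qed

lemma norm_diff_le_supn:
  assumes "linf F" "linf G"
  shows "cmod (F n x - G n x) \<le> supn (\<lambda>x. F n x - G n x)"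
proof -
  have "(\<lambda>x. F n x - G n x) \<in> C0"
    using assms C0_diff unfolding linf_def by blast
  then obtain B where "\<And>x. cmod (F n x - G n x) \<le> B"
    using C0_bounded by blast
  then show ?thesis
    by (rule norm_le_supn)
qed

lemma linf_zero: "linf seq_zero"
  unfolding linf_iff_bounded seq_zero_def using C0_zero by auto

lemma linf_diag:
  assumes "a \<in> C0"
  shows "linf (diag a)"
proof -
  obtain B where "\<And>x. cmod (a x) \<le> B"
    using C0_bounded[OF assms] by blast
  with assms show ?thesis
    unfolding linf_iff_bounded diag_def by blast
qed

lemma linf_add:
  assumes "linf F" "linf G"
  shows "linf (seq_add F G)"
proof -
  obtain M1 M2 where "\<And>n x. cmod (F n x) \<le> M1" "\<And>n x. cmod (G n x) \<le> M2"
    using assms unfolding linf_iff_bounded by blast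
  then have "cmod (F n x + G n x) \<le> M1 + M2" for n x
    by (meson add_mono norm_triangle_le)
  with assms show ?thesis
    unfolding linf_iff_bounded seq_add_def by (blast intro: C0_add)
qed

lemma linf_mult_bounded_continuous:
  assumes F: "linf F" and cont: "\<And>n. continuous_on UNIV (H n)" and bound: "\<And>n x. cmod (H n x) \<le> C"
  shows "linf (\<lambda>n x. F n x * H n x)"
proof -
  obtain M where C0: "\<And>n. F n \<in> C0" and M: "\<And>n x. cmod (F n x) \<le> M"
    using F unfolding linf_iff_bounded by blast
  have "cmod (F n x * H n x) \<le> M * C" for n x
    unfolding norm_mult using M bound by (rule mult_mono) (auto intro: order_trans[OF norm_ge_zero M])
  moreover have "(\<lambda>x. F n x * H n x) \<in> C0" for n
    using C0 cont bound by (rule C0_mult_bounded_continuous)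
  ultimately show ?thesis
    unfolding linf_iff_bounded by blast
qed

lemma linf_mult:
  assumes "linf F" "linf G"
  shows "linf (seq_mult F G)"
proof -
  obtain M where "\<And>n. G n \<in> C0" "\<And>n x. cmod (G n x) \<le> M"
    using \<open>linf G\<close> unfolding linf_iff_bounded by blast
  with \<open>linf F\<close> show ?thesis
    unfolding seq_mult_def by (blast intro: linf_mult_bounded_continuous C0_continuous)
qed

lemma linf_scale: "linf F \<Longrightarrow> linf (seq_scale c F)"
  unfolding linf_iff_bounded seq_scale_def
proof (elim conjE exE, intro conjI allI exI)
  fix M n x
  assume "\<forall>n. F n \<in> C0" "\<forall>n x. cmod (F n x) \<le> M"
  then show "(\<lambda>x. c * F n x) \<in> C0" "cmod (c * F n x) \<le> cmod c * M"
    by (auto intro: C0_const_mult simp: norm_mult mult_left_mono)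
qed

lemma linf_diff: "linf F \<Longrightarrow> linf G \<Longrightarrow> linf (seq_diff F G)"
  using linf_add[OF _ linf_scale[of G "-1"], of F]
  by (simp add: seq_add_def seq_scale_def seq_diff_def)

section \<open>Cutoff functions\<close>

definition cutoff :: "'a::metric_space \<Rightarrow> real \<Rightarrow> 'a \<Rightarrow> complex" where
  "cutoff x0 R x = complex_of_real (max 0 (min 1 (R - dist x0 x)))"

lemma continuous_on_cutoff: "continuous_on S (cutoff x0 R)"
  unfolding cutoff_def by (intro continuous_intros)

lemma norm_cutoff_le_1: "cmod (cutoff x0 R x) \<le> 1"
  unfolding cutoff_def by auto

lemma norm_1_minus_cutoff_le_1: "cmod (1 - cutoff x0 R x) \<le> 1"
proof -
  have "1 - cutoff x0 R x = complex_of_real (1 - max 0 (min 1 (R - dist x0 x)))"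
    unfolding cutoff_def by simp
  then show ?thesis
    by (simp only: norm_of_real)
qed

lemma cutoff_eq_1: "dist x0 x \<le> R - 1 \<Longrightarrow> cutoff x0 R x = 1"
  unfolding cutoff_def by auto

lemma cutoff_eq_0: "R \<le> dist x0 x \<Longrightarrow> cutoff x0 R x = 0"
  unfolding cutoff_def by auto

lemma cutoff_in_C0: "compact (cball x0 R) \<Longrightarrow> cutoff x0 R \<in> C0"
  unfolding C0_def using continuous_on_cutoff
  by (auto intro!: exI[of _ "cball x0 R"] simp: cutoff_eq_0)

lemma supn_mult_cutoff_le:
  assumes small: "\<And>x. x \<in> ball x0 R \<Longrightarrow> cmod (f x) \<le> c" and "c \<ge> 0"
  shows "supn (\<lambda>x. f x * cutoff x0 R x) \<le> c"
proof (rule supn_le)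
  fix x
  show "cmod (f x * cutoff x0 R x) \<le> c"
  proof (cases "x \<in> ball x0 R")
    case True
    have "cmod (f x) * cmod (cutoff x0 R x) \<le> cmod (f x)"
      by (rule mult_right_le_one_le) (simp_all add: norm_cutoff_le_1)
    with small[OF True] show ?thesis
      by (simp add: norm_mult)
  qed (simp add: cutoff_eq_0 \<open>c \<ge> 0\<close>)
qed

lemma clamp_lipschitz:
  "\<bar>max 0 (min 1 (R - a)) - max 0 (min 1 (R - b))\<bar> \<le> \<bar>a - (b::real)\<bar>"
  by (cases "R - a \<le> 0"; cases "R - a \<le> 1"; cases "R - b \<le> 0"; cases "R - b \<le> 1")
     (simp_all add: abs_if)

lemma cutoff_lipschitz: "cmod (cutoff x0 R s - cutoff x0 R t) \<le> dist s t"
proof -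
  have "cmod (cutoff x0 R s - cutoff x0 R t) \<le> \<bar>dist x0 s - dist x0 t\<bar>"
    unfolding cutoff_def by (simp only: of_real_diff[symmetric] norm_of_real clamp_lipschitz)
  also have "\<dots> \<le> dist s t"
    by (metis abs_dist_diff_le dist_commute)
  finally show ?thesis .
qed

section \<open>Ultrafilters\<close>

lemma nonprincipal_ultrafilter_neq_bot: "nonprincipal_ultrafilter U \<Longrightarrow> U \<noteq> bot"
  unfolding nonprincipal_ultrafilter_def by simp

lemma nonprincipal_ultrafilter_le_sequentially:
  assumes "nonprincipal_ultrafilter U"
  shows "U \<le> sequentially"
  unfolding le_sequentially
proof
  fix N :: nat
  have "eventually (\<lambda>n. \<forall>j\<in>{..<N}. n \<noteq> j) U"
    using assms unfolding nonprincipal_ultrafilter_def by (intro eventually_ball_finite) auto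
  then show "eventually (\<lambda>n. N \<le> n) U"
    by (rule eventually_mono) (auto simp: not_le[symmetric])
qed

text \<open>A cluster point is a limit: an ultrafilter that does not eventually avoid a
  neighbourhood eventually stays in it.\<close>
lemma nonprincipal_ultrafilter_compact_tendsto:
  assumes U: "nonprincipal_ultrafilter U" and "compact K" and in_K: "eventually (\<lambda>n. f n \<in> K) U"
  obtains l where "(f \<longlongrightarrow> l) U"
proof -
  have "filtermap f U \<noteq> bot" "eventually (\<lambda>x. x \<in> K) (filtermap f U)"
    using nonprincipal_ultrafilter_neq_bot[OF U] in_K by (simp_all add: filtermap_bot_iff eventually_filtermap)
  then obtain l where l: "inf (nhds l) (filtermap f U) \<noteq> bot"
    using \<open>compact K\<close> unfolding compact_filter by blast
  have "eventually (\<lambda>n. f n \<in> S) U" if "open S" "l \<in> S" for S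
  proof (rule ccontr)
    assume "\<not> eventually (\<lambda>n. f n \<in> S) U"
    then have "eventually (\<lambda>x. x \<notin> S) (filtermap f U)"
      using U unfolding nonprincipal_ultrafilter_def by (auto simp: eventually_filtermap)
    moreover have "eventually (\<lambda>x. x \<in> S) (nhds l)"
      using that by (rule eventually_nhds_in_open)
    ultimately have "eventually (\<lambda>x. False) (inf (nhds l) (filtermap f U))"
      unfolding eventually_inf by blast
    with l show False
      by (simp add: eventually_False)
  qed
  then show thesis
    by (intro that[of l] topological_tendstoI)
qed

lemma eventually_diagonal_index:
  fixes P :: "nat \<Rightarrow> nat \<Rightarrow> bool"
  assumes U: "U \<le> sequentially" and ev: "\<And>k. eventually (P k) U" and P0: "\<And>n. P 0 n"
  obtains \<kappa> where "filterlim \<kappa> at_top U" "\<And>n. P (\<kappa> n) n"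
proof
  define \<kappa> where "\<kappa> n = (GREATEST k. k \<le> n \<and> P k n)" for n
  show "P (\<kappa> n) n" for n
    using GreatestI_nat[of "\<lambda>k. k \<le> n \<and> P k n" 0 n] P0 by (simp add: \<kappa>_def)
  have "eventually (\<lambda>n. k \<le> n \<and> P k n) U" for k
    using ev[of k] U[unfolded le_sequentially] by (simp add: eventually_conj_iff)
  then have "eventually (\<lambda>n. k \<le> \<kappa> n) U" for k
    by (rule eventually_mono) (use Greatest_le_nat[of "\<lambda>k. k \<le> _ \<and> P k _"] in \<open>auto simp: \<kappa>_def\<close>)
  then show "filterlim \<kappa> at_top U"
    unfolding filterlim_at_top by blast
qed

section \<open>The ideal I as the sequences tending to zero locally uniformly\<close>

definition locally_uniformly_null :: "nat filter \<Rightarrow> 'a::metric_space \<Rightarrow> (nat \<Rightarrow> 'a \<Rightarrow> complex) \<Rightarrow> bool" where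
  "locally_uniformly_null U x0 F \<longleftrightarrow>
     (\<forall>r e. e > 0 \<longrightarrow> eventually (\<lambda>n. \<forall>x\<in>cball x0 r. cmod (F n x) \<le> e) U)"

lemma locally_uniformly_nullD:
  "locally_uniformly_null U x0 F \<Longrightarrow> e > 0 \<Longrightarrow> eventually (\<lambda>n. \<forall>x\<in>cball x0 r. cmod (F n x) \<le> e) U"
  unfolding locally_uniformly_null_def by blast

lemma locally_uniformly_null_zero: "locally_uniformly_null U x0 (\<lambda>n x. 0)"
  unfolding locally_uniformly_null_def by simp

lemma locally_uniformly_null_add:
  assumes "locally_uniformly_null U x0 F" "locally_uniformly_null U x0 G"
  shows "locally_uniformly_null U x0 (\<lambda>n x. F n x + G n x)"
  unfolding locally_uniformly_null_def
proof (intro allI impI)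
  fix r e :: real
  assume "e > 0"
  then have "eventually (\<lambda>n. \<forall>x\<in>cball x0 r. cmod (F n x) \<le> e/2) U"
    "eventually (\<lambda>n. \<forall>x\<in>cball x0 r. cmod (G n x) \<le> e/2) U"
    using assms[THEN locally_uniformly_nullD, OF half_gt_zero] by blast+
  then show "eventually (\<lambda>n. \<forall>x\<in>cball x0 r. cmod (F n x + G n x) \<le> e) U"
  proof eventually_elim
    case (elim n)
    show ?case
    proof
      fix x
      assume "x \<in> cball x0 r"
      with elim have "cmod (F n x) \<le> e/2" "cmod (G n x) \<le> e/2"
        by auto
      then show "cmod (F n x + G n x) \<le> e"
        using norm_triangle_ineq[of "F n x" "G n x"] by linarith
    qed
  qed
qed

lemma locally_uniformly_null_mult_bounded:
  assumes bounded: "\<And>n x. cmod (F n x) \<le> M" and null: "locally_uniformly_null U x0 G"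
  shows "locally_uniformly_null U x0 (\<lambda>n x. F n x * G n x)"
  unfolding locally_uniformly_null_def
proof (intro allI impI)
  fix r e :: real
  assume "e > 0"
  then have "eventually (\<lambda>n. \<forall>x\<in>cball x0 r. cmod (G n x) \<le> e / (\<bar>M\<bar> + 1)) U"
    using null by (intro locally_uniformly_nullD) auto
  moreover have "cmod (F n x * G n x) \<le> e" if "cmod (G n x) \<le> e / (\<bar>M\<bar> + 1)" for n x
  proof -
    have "cmod (F n x * G n x) \<le> (\<bar>M\<bar> + 1) * (e / (\<bar>M\<bar> + 1))"
      unfolding norm_mult using bounded[of n x] that by (intro mult_mono) auto
    then show ?thesis
      by simp
  qed
  ultimately show "eventually (\<lambda>n. \<forall>x\<in>cball x0 r. cmod (F n x * G n x) \<le> e) U"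
    by (auto elim: eventually_mono)
qed

lemma uequiv_imp_locally_uniformly_null:
  assumes "linf F" "linf G" "uequiv U F G"
  shows "locally_uniformly_null U x0 (\<lambda>n x. F n x - G n x)"
  unfolding locally_uniformly_null_def
proof (intro allI impI)
  fix r e :: real
  assume "e > 0"
  with \<open>uequiv U F G\<close> have "eventually (\<lambda>n. supn (\<lambda>x. F n x - G n x) < e) U"
    unfolding uequiv_def by (auto dest: order_tendstoD(2))
  then show "eventually (\<lambda>n. \<forall>x\<in>cball x0 r. cmod (F n x - G n x) \<le> e) U"
    by (rule eventually_mono) (use norm_diff_le_supn[OF assms(1,2)] in \<open>fastforce intro: order_trans\<close>)
qed

lemma in_I_imp_locally_uniformly_null:
  assumes "in_I U x0 F"
  shows "locally_uniformly_null U x0 F"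
proof -
  obtain G r where "linf F" "linf G" "uequiv U F G" and r: "filterlim r at_top U"
    and G0: "\<And>n x. x \<in> cball x0 (r n) \<Longrightarrow> G n x = 0"
    using assms unfolding in_I_def by blast
  have "locally_uniformly_null U x0 G"
    unfolding locally_uniformly_null_def
  proof (intro allI impI)
    fix R e :: real
    assume "e > 0"
    have "eventually (\<lambda>n. R \<le> r n) U"
      using r by (simp add: filterlim_at_top)
    then show "eventually (\<lambda>n. \<forall>x\<in>cball x0 R. cmod (G n x) \<le> e) U"
      by (rule eventually_mono) (use G0 \<open>e > 0\<close> in auto)
  qed
  with uequiv_imp_locally_uniformly_null[OF \<open>linf F\<close> \<open>linf G\<close> \<open>uequiv U F G\<close>]
  show ?thesis
    using locally_uniformly_null_add by fastforce
qed

lemma locally_uniformly_null_imp_in_I: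
  assumes U: "U \<le> sequentially" and F: "linf F" and null: "locally_uniformly_null U x0 F"
  shows "in_I U x0 F"
proof -
  define small where
    "small k n \<longleftrightarrow> (\<forall>x\<in>ball x0 (real k). cmod (F n x) \<le> inverse (real (Suc k)))" for k n
  have "eventually (small k) U" for k
    using locally_uniformly_nullD[OF null, of "inverse (real (Suc k))" "real k"]
    by (auto simp: small_def elim!: eventually_mono)
  then obtain \<kappa> where \<kappa>: "filterlim \<kappa> at_top U" and small: "\<And>n. small (\<kappa> n) n"
    using eventually_diagonal_index[OF U, of small] by (auto simp: small_def)
  define G where "G n x = F n x * (1 - cutoff x0 (real (\<kappa> n)) x)" for n x
  have G: "linf G"
    unfolding G_def using F norm_1_minus_cutoff_le_1
    by (intro linf_mult_bounded_continuous continuous_intros continuous_on_cutoff)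
  have G0: "\<forall>x\<in>cball x0 (real (\<kappa> n) - 1). G n x = 0" for n
    by (simp add: G_def cutoff_eq_1)
  have "supn (\<lambda>x. F n x * cutoff x0 (real (\<kappa> n)) x) \<le> inverse (real (Suc (\<kappa> n)))" for n
    using small[of n] by (intro supn_mult_cutoff_le) (simp_all add: small_def)
  moreover have "(\<lambda>x. F n x - G n x) = (\<lambda>x. F n x * cutoff x0 (real (\<kappa> n)) x)" for n
    by (simp add: G_def algebra_simps)
  ultimately have diff_bound: "supn (\<lambda>x. F n x - G n x) \<le> inverse (real (Suc (\<kappa> n)))" for n
    by simp
  have nonneg: "0 \<le> supn (\<lambda>x. F n x - G n x)" for n
    using order_trans[OF norm_ge_zero norm_diff_le_supn[OF F G]] .
  have "uequiv U F G"
    unfolding uequiv_def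
    by (rule tendsto_sandwich[OF _ _ tendsto_const filterlim_compose[OF LIMSEQ_inverse_real_of_nat \<kappa>]])
       (simp_all add: nonneg diff_bound del: of_nat_Suc)
  moreover have "filterlim (\<lambda>n. real (\<kappa> n) - 1) at_top U"
    unfolding filterlim_at_top
  proof
    fix Z :: real
    have "eventually (\<lambda>n. nat \<lceil>Z + 1\<rceil> \<le> \<kappa> n) U"
      using \<kappa> by (simp add: filterlim_at_top)
    then show "eventually (\<lambda>n. Z \<le> real (\<kappa> n) - 1) U"
      by (rule eventually_mono) linarith
  qed
  ultimately show ?thesis
    unfolding in_I_def using F G G0 by blast
qed

lemma in_I_iff_locally_uniformly_null:
  "U \<le> sequentially \<Longrightarrow> in_I U x0 F \<longleftrightarrow> linf F \<and> locally_uniformly_null U x0 F"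
  using in_I_def in_I_imp_locally_uniformly_null locally_uniformly_null_imp_in_I by blast

section \<open>Ultralimits of equicontinuous sequences\<close>

lemma tendsto_modulus_of_continuity:
  assumes U: "U \<noteq> bot" and lim: "\<And>x. ((\<lambda>n. G n x) \<longlongrightarrow> g x) U"
    and modulus: "eventually (\<lambda>n. \<forall>s\<in>S. \<forall>t\<in>S. dist s t < d \<longrightarrow> cmod (G n s - G n t) \<le> e) U"
    and "s \<in> S" "t \<in> S" "dist s t < d"
  shows "cmod (g s - g t) \<le> e"
proof -
  have "eventually (\<lambda>n. cmod (G n s - G n t) \<le> e) U"
    using modulus by (rule eventually_mono) (use assms(4-6) in blast)
  then show ?thesis
    by (rule tendsto_upperbound[OF tendsto_norm[OF tendsto_diff[OF lim lim]] _ U])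
qed

text \<open>Check the convergence on a finite \<open>\<delta>\<close>-net of the compact ball and interpolate
  (the usual \<open>\<epsilon>/3\<close> argument).\<close>
lemma ueqc_uniform_limit_on_cball:
  assumes U: "U \<noteq> bot" and compact: "compact (cball x0 r)" and "r > 0" "e > 0"
    and lim: "\<And>x. ((\<lambda>n. G n x) \<longlongrightarrow> g x) U" and eq: "ueqc U x0 G"
  shows "eventually (\<lambda>n. \<forall>x\<in>cball x0 r. cmod (G n x - g x) \<le> e) U"
proof -
  obtain d where "d > 0" and close: "eventually (\<lambda>n. \<forall>s\<in>cball x0 r. \<forall>t\<in>cball x0 r.
      dist s t < d \<longrightarrow> cmod (G n s - G n t) \<le> e/3) U"
    using eq \<open>r > 0\<close> \<open>e > 0\<close> unfolding ueqc_def by (meson zero_less_divide_iff zero_less_numeral)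
  obtain T where T: "T \<subseteq> cball x0 r" "finite T" "cball x0 r \<subseteq> (\<Union>y\<in>T. ball y d)"
  proof (rule compactE_image[OF compact])
    show "cball x0 r \<subseteq> (\<Union>y\<in>cball x0 r. ball y d)"
      using \<open>d > 0\<close> by auto
  qed auto
  have "eventually (\<lambda>n. dist (G n y) (g y) < e/3) U" for y
    using \<open>e > 0\<close> by (intro tendstoD[OF lim]) simp
  then have "eventually (\<lambda>n. \<forall>y\<in>T. dist (G n y) (g y) < e/3) U"
    using T(2) by (intro eventually_ball_finite) auto
  with close show ?thesis
  proof eventually_elim
    case (elim n)
    show ?case
    proof
      fix x
      assume x: "x \<in> cball x0 r"
      then obtain y where y: "y \<in> T" "dist y x < d"
        using T(3) by auto
      with T(1) have "y \<in> cball x0 r"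
        by blast
      have "cmod (G n x - G n y) \<le> e/3"
        using elim(1) x \<open>y \<in> cball x0 r\<close> y(2) by (simp add: dist_commute)
      moreover have "cmod (G n y - g y) \<le> e/3"
        using elim(2) y(1) by (auto simp: dist_norm intro: less_imp_le)
      moreover have "cmod (g y - g x) \<le> e/3"
        using tendsto_modulus_of_continuity[OF U lim close \<open>y \<in> cball x0 r\<close> x y(2)] .
      moreover have "cmod (G n x - g x) \<le> cmod (G n x - G n y) + cmod (G n y - g y + (g y - g x))"
        using norm_triangle_ineq[of "G n x - G n y" "G n y - g y + (g y - g x)"] by simp
      moreover have "cmod (G n y - g y + (g y - g x)) \<le> cmod (G n y - g y) + cmod (g y - g x)"
        by (rule norm_triangle_ineq)
      ultimately show "cmod (G n x - g x) \<le> e"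
        by linarith
    qed
  qed
qed

lemma ueqc_locally_uniform_limit:
  assumes U: "U \<noteq> bot" and proper: "\<And>r. compact (cball x0 r)"
    and lim: "\<And>x. ((\<lambda>n. G n x) \<longlongrightarrow> g x) U" and eq: "ueqc U x0 G"
  shows "locally_uniformly_null U x0 (\<lambda>n x. G n x - g x)"
  unfolding locally_uniformly_null_def
proof (intro allI impI)
  fix r e :: real
  assume "e > 0"
  have "max r 1 > 0"
    by simp
  with ueqc_uniform_limit_on_cball[OF U proper _ \<open>e > 0\<close> lim eq]
  have "eventually (\<lambda>n. \<forall>x\<in>cball x0 (max r 1). cmod (G n x - g x) \<le> e) U"
    by blast
  then show "eventually (\<lambda>n. \<forall>x\<in>cball x0 r. cmod (G n x - g x) \<le> e) U"
    by (rule eventually_mono) auto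
qed

lemma continuous_on_locally_uniform_limit:
  assumes U: "U \<noteq> bot" and cont: "\<And>n. continuous_on UNIV (G n)"
    and null: "locally_uniformly_null U x0 (\<lambda>n x. G n x - g x)"
  shows "continuous_on UNIV g"
proof -
  have "uniform_limit (cball x0 r) G g U" for r
  proof (rule uniform_limitI)
    fix e :: real
    assume "e > 0"
    then have "eventually (\<lambda>n. \<forall>x\<in>cball x0 r. cmod (G n x - g x) \<le> e/2) U"
      using locally_uniformly_nullD[OF null half_gt_zero] by blast
    then show "eventually (\<lambda>n. \<forall>x\<in>cball x0 r. dist (G n x) (g x) < e) U"
      by (rule eventually_mono) (use \<open>e > 0\<close> in \<open>auto simp: dist_norm\<close>)
  qed
  then have "continuous_on (cball x0 r) g" for r
    by (rule uniform_limit_theorem[OF always_eventually _ U, rotated])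
       (blast intro: continuous_on_subset[OF cont])
  then have "continuous_on (ball x0 r) g" for r
    by (rule continuous_on_subset[OF _ ball_subset_cball])
  then have "continuous (at x) g" for x
    using continuous_on_eq_continuous_at[OF open_ball, of x0 "dist x0 x + 1" g] by simp
  then show ?thesis
    by (simp add: continuous_at_imp_continuous_on)
qed

lemma ueqc_ultralimit:
  assumes U: "nonprincipal_ultrafilter U" and proper: "\<And>r. compact (cball x0 r)"
    and G: "linf G" and eq: "ueqc U x0 G"
  obtains g M where "continuous_on UNIV g" "\<And>x. cmod (g x) \<le> M"
    "locally_uniformly_null U x0 (\<lambda>n x. G n x - g x)"
proof -
  have bot: "U \<noteq> bot"
    using U by (rule nonprincipal_ultrafilter_neq_bot)
  obtain M where C0: "\<And>n. G n \<in> C0" and M: "\<And>n x. cmod (G n x) \<le> M"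
    using G unfolding linf_iff_bounded by blast
  have "\<exists>l. ((\<lambda>n. G n x) \<longlongrightarrow> l) U" for x
  proof -
    have "eventually (\<lambda>n. G n x \<in> cball 0 M) U"
      using M by simp
    then show ?thesis
      by (rule nonprincipal_ultrafilter_compact_tendsto[OF U compact_cball]) blast
  qed
  then obtain g where lim: "\<And>x. ((\<lambda>n. G n x) \<longlongrightarrow> g x) U"
    using choice[of "\<lambda>x l. ((\<lambda>n. G n x) \<longlongrightarrow> l) U"] by blast
  have "cmod (g x) \<le> M" for x
    using tendsto_upperbound[OF tendsto_norm[OF lim] _ bot] M by simp
  moreover have null: "locally_uniformly_null U x0 (\<lambda>n x. G n x - g x)"
    using bot proper lim eq by (rule ueqc_locally_uniform_limit)
  moreover have "continuous_on UNIV g"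
    using bot C0_continuous[OF C0] null by (rule continuous_on_locally_uniform_limit)
  ultimately show thesis
    using that by blast
qed

section \<open>The algebra A^{cU}/I\<close>

lemma seq_mult_commute: "seq_mult F G = seq_mult G F"
  by (simp add: seq_mult_def mult.commute)

lemma in_I_seq_zero: "U \<le> sequentially \<Longrightarrow> in_I U x0 seq_zero"
  using linf_zero
  by (simp add: in_I_iff_locally_uniformly_null locally_uniformly_null_zero seq_zero_def)

lemma in_I_seq_add:
  "U \<le> sequentially \<Longrightarrow> in_I U x0 F \<Longrightarrow> in_I U x0 G \<Longrightarrow> in_I U x0 (seq_add F G)"
  using linf_add[of F G] locally_uniformly_null_add[of U x0 F G]
  by (simp add: in_I_iff_locally_uniformly_null seq_add_def)

lemma in_I_seq_mult:
  assumes "U \<le> sequentially" "linf F" "in_I U x0 G"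
  shows "in_I U x0 (seq_mult F G)"
proof -
  obtain M where "\<And>n x. cmod (F n x) \<le> M"
    using \<open>linf F\<close> unfolding linf_iff_bounded by blast
  with assms show ?thesis
    using linf_mult[of F G] locally_uniformly_null_mult_bounded[of F M U x0 G]
    by (simp add: in_I_iff_locally_uniformly_null seq_mult_def)
qed

lemma in_I_seq_scale:
  "U \<le> sequentially \<Longrightarrow> in_I U x0 F \<Longrightarrow> in_I U x0 (seq_scale c F)"
  using linf_scale[of F c] locally_uniformly_null_mult_bounded[of "\<lambda>n x. c" "cmod c" U x0 F]
  by (simp add: in_I_iff_locally_uniformly_null seq_scale_def)

lemma in_I_approximable:
  assumes U: "U \<le> sequentially" and F: "linf F"
    and approx: "\<And>e. e > 0 \<Longrightarrow> \<exists>G. in_I U x0 G \<and> eventually (\<lambda>n. supn (\<lambda>x. F n x - G n x) < e) U"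
  shows "in_I U x0 F"
  unfolding in_I_iff_locally_uniformly_null[OF U] locally_uniformly_null_def
proof (intro conjI F allI impI)
  fix r e :: real
  assume "e > 0"
  then obtain G where G: "in_I U x0 G" and close: "eventually (\<lambda>n. supn (\<lambda>x. F n x - G n x) < e/2) U"
    using approx half_gt_zero by blast
  then have "linf G" and null: "locally_uniformly_null U x0 G"
    by (simp_all add: in_I_iff_locally_uniformly_null[OF U])
  have "eventually (\<lambda>n. \<forall>x\<in>cball x0 r. cmod (G n x) \<le> e/2) U"
    using locally_uniformly_nullD[OF null half_gt_zero[OF \<open>e > 0\<close>]] .
  with close show "eventually (\<lambda>n. \<forall>x\<in>cball x0 r. cmod (F n x) \<le> e) U"
  proof eventually_elim
    case (elim n)
    show ?case
    proof
      fix x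
      assume "x \<in> cball x0 r"
      then have "cmod (G n x) \<le> e/2"
        using elim(2) by blast
      moreover have "cmod (F n x - G n x) < e/2"
        using norm_diff_le_supn[OF F \<open>linf G\<close>, of n x] elim(1) by linarith
      ultimately show "cmod (F n x) \<le> e"
        using norm_triangle_ineq[of "F n x - G n x" "G n x"] by simp
    qed
  qed
qed

lemma uequiv_refl: "uequiv U F F"
  by (simp add: uequiv_def supn_def)

lemma in_I_imp_in_AcU:
  assumes "in_I U x0 F"
  shows "in_AcU U x0 F"
proof -
  obtain G r where "linf F" "linf G" "uequiv U F G" and r: "filterlim r at_top U"
    and G0: "\<And>n x. x \<in> cball x0 (r n) \<Longrightarrow> G n x = 0"
    using assms unfolding in_I_def by blast
  have "ueqc U x0 G"
    unfolding ueqc_def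
  proof (intro allI impI exI[of _ 1] conjI)
    fix R e :: real
    assume "e > 0"
    have "eventually (\<lambda>n. R \<le> r n) U"
      using r by (simp add: filterlim_at_top)
    then show "eventually (\<lambda>n. \<forall>s\<in>cball x0 R. \<forall>t\<in>cball x0 R. dist s t < 1 \<longrightarrow> cmod (G n s - G n t) \<le> e) U"
      by (rule eventually_mono) (use G0 \<open>e > 0\<close> in auto)
  qed simp
  with \<open>linf F\<close> \<open>linf G\<close> \<open>uequiv U F G\<close> show ?thesis
    unfolding in_AcU_def by blast
qed

lemma in_AcU_cutoff_sequence:
  assumes proper: "\<And>r. compact (cball x0 r)"
  shows "in_AcU U x0 (\<lambda>n. cutoff x0 (real n + 1))"
proof -
  have "linf (\<lambda>n. cutoff x0 (real n + 1))"
    unfolding linf_iff_bounded using cutoff_in_C0[OF proper] norm_cutoff_le_1 by blast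
  moreover have "ueqc U x0 (\<lambda>n. cutoff x0 (real n + 1))"
    unfolding ueqc_def
  proof (intro allI impI)
    fix r e :: real
    assume "e > 0"
    have "cmod (cutoff x0 (real n + 1) s - cutoff x0 (real n + 1) t) \<le> e" if "dist s t < e" for n s t
      using cutoff_lipschitz[of x0 "real n + 1" s t] that by linarith
    with \<open>e > 0\<close> show "\<exists>d>0. eventually (\<lambda>n. \<forall>s\<in>cball x0 r. \<forall>t\<in>cball x0 r.
        dist s t < d \<longrightarrow> cmod (cutoff x0 (real n + 1) s - cutoff x0 (real n + 1) t) \<le> e) U"
      by (intro exI[of _ e] conjI always_eventually allI ballI impI) auto
  qed
  ultimately show ?thesis
    unfolding in_AcU_def using uequiv_refl by blast
qed

lemma cutoff_sequence_unit:
  assumes U: "U \<le> sequentially" and proper: "\<And>r. compact (cball x0 r)" and F: "in_AcU U x0 F"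
  shows "in_I U x0 (seq_diff (seq_mult (\<lambda>n. cutoff x0 (real n + 1)) F) F)"
proof -
  have "linf F" "linf (\<lambda>n. cutoff x0 (real n + 1))"
    using F in_AcU_cutoff_sequence[OF proper] unfolding in_AcU_def by blast+
  moreover have "locally_uniformly_null U x0 (seq_diff (seq_mult (\<lambda>n. cutoff x0 (real n + 1)) F) F)"
    unfolding locally_uniformly_null_def
  proof (intro allI impI)
    fix r e :: real
    assume "e > 0"
    have "eventually (\<lambda>n. nat \<lceil>r\<rceil> \<le> n) U"
      using U unfolding le_sequentially by blast
    then show "eventually (\<lambda>n. \<forall>x\<in>cball x0 r.
        cmod (seq_diff (seq_mult (\<lambda>n. cutoff x0 (real n + 1)) F) F n x) \<le> e) U"
      by (rule eventually_mono)
         (use \<open>e > 0\<close> in \<open>auto simp: seq_diff_def seq_mult_def cutoff_eq_1 le_nat_iff ceiling_le_iff\<close>)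
  qed
  ultimately show ?thesis
    by (simp add: in_I_iff_locally_uniformly_null[OF U] linf_diff linf_mult)
qed

lemma in_AcU_diag:
  assumes proper: "\<And>r. compact (cball x0 r)" and a: "a \<in> C0"
  shows "in_AcU U x0 (diag a)"
proof -
  have "ueqc U x0 (diag a)"
    unfolding ueqc_def
  proof (intro allI impI)
    fix r e :: real
    assume "e > 0"
    have "uniformly_continuous_on (cball x0 r) a"
      using proper C0_continuous[OF a] by (blast intro: compact_uniformly_continuous continuous_on_subset)
    then obtain d where "d > 0" "\<forall>s\<in>cball x0 r. \<forall>t\<in>cball x0 r. dist s t < d \<longrightarrow> dist (a s) (a t) < e"
      unfolding uniformly_continuous_on_def using \<open>e > 0\<close> by metis
    then show "\<exists>d>0. eventually (\<lambda>n. \<forall>s\<in>cball x0 r. \<forall>t\<in>cball x0 r.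
        dist s t < d \<longrightarrow> cmod (diag a n s - diag a n t) \<le> e) U"
      by (intro exI[of _ d] conjI always_eventually) (auto simp: diag_def dist_norm less_imp_le)
  qed
  with linf_diag[OF a] show ?thesis
    unfolding in_AcU_def using uequiv_refl by blast
qed

lemma diag_eq_if_in_I:
  assumes U: "U \<noteq> bot" and "in_I U x0 (seq_diff (diag a) (diag b))"
  shows "a = b"
proof
  fix x
  have null: "locally_uniformly_null U x0 (seq_diff (diag a) (diag b))"
    using assms(2) by (rule in_I_imp_locally_uniformly_null)
  have "cmod (a x - b x) \<le> e" if e: "e > 0" for e
  proof -
    obtain n where "\<forall>y\<in>cball x0 (dist x0 x). cmod (seq_diff (diag a) (diag b) n y) \<le> e"
      using eventually_happens'[OF U locally_uniformly_nullD[OF null e]] by blast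
    then show ?thesis
      by (simp add: seq_diff_def diag_def)
  qed
  then show "a x = b x"
    using dense_ge[of 0 "cmod (a x - b x)"] by simp
qed

lemma mult_diag_equiv_diag:
  assumes U: "nonprincipal_ultrafilter U" and proper: "\<And>r. compact (cball x0 r)"
    and a: "a \<in> C0" and F: "in_AcU U x0 F"
  shows "\<exists>b\<in>C0. in_I U x0 (seq_diff (seq_mult F (diag a)) (diag b))"
proof -
  obtain G where "linf F" "linf G" "uequiv U F G" "ueqc U x0 G"
    using F unfolding in_AcU_def by blast
  then obtain g M where "continuous_on UNIV g" "\<And>x. cmod (g x) \<le> M"
    and G_g: "locally_uniformly_null U x0 (\<lambda>n x. G n x - g x)"
    using ueqc_ultralimit[OF U proper] by blast
  then have b: "(\<lambda>x. a x * g x) \<in> C0"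
    using a by (rule_tac C0_mult_bounded_continuous)
  obtain B where "\<And>x. cmod (a x) \<le> B"
    using C0_bounded[OF a] by blast
  then have "locally_uniformly_null U x0 (\<lambda>n x. a x * ((F n x - G n x) + (G n x - g x)))"
    using uequiv_imp_locally_uniformly_null[OF \<open>linf F\<close> \<open>linf G\<close> \<open>uequiv U F G\<close>] G_g
    by (intro locally_uniformly_null_mult_bounded locally_uniformly_null_add)
  then have "locally_uniformly_null U x0 (seq_diff (seq_mult F (diag a)) (diag (\<lambda>x. a x * g x)))"
    by (simp add: seq_diff_def seq_mult_def diag_def algebra_simps)
  moreover have "linf (seq_diff (seq_mult F (diag a)) (diag (\<lambda>x. a x * g x)))"
    using \<open>linf F\<close> a b by (intro linf_diff linf_mult linf_diag)
  ultimately show ?thesis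
    using b nonprincipal_ultrafilter_le_sequentially[OF U] in_I_iff_locally_uniformly_null by blast
qed

lemma in_I_if_annihilates_C0:
  assumes U: "U \<le> sequentially" and proper: "\<And>r. compact (cball x0 r)"
    and F: "in_AcU U x0 F" and annihilates: "\<And>a. a \<in> C0 \<Longrightarrow> in_I U x0 (seq_mult F (diag a))"
  shows "in_I U x0 F"
  unfolding in_I_iff_locally_uniformly_null[OF U] locally_uniformly_null_def
proof (intro conjI allI impI)
  show "linf F"
    using F unfolding in_AcU_def by blast
  fix r e :: real
  assume "e > 0"
  have "in_I U x0 (seq_mult F (diag (cutoff x0 (r + 1))))"
    using annihilates cutoff_in_C0 proper by blast
  then have "locally_uniformly_null U x0 (seq_mult F (diag (cutoff x0 (r + 1))))"
    by (simp add: in_I_iff_locally_uniformly_null[OF U])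
  then have "eventually (\<lambda>n. \<forall>x\<in>cball x0 r. cmod (seq_mult F (diag (cutoff x0 (r + 1))) n x) \<le> e) U"
    using \<open>e > 0\<close> by (rule locally_uniformly_nullD)
  then show "eventually (\<lambda>n. \<forall>x\<in>cball x0 r. cmod (F n x) \<le> e) U"
    by (rule eventually_mono) (simp add: seq_mult_def diag_def cutoff_eq_1)
qed

theorem mainTheorem4:
  fixes U :: "nat filter" and x0 :: "'a::{metric_space, second_countable_topology}"
  assumes U: "nonprincipal_ultrafilter U"
    and lc: "locally compact (UNIV :: 'a set)"
    and proper: "\<forall>r. compact (cball x0 r)"
  shows
    \<comment> \<open>(1) I is a closed two-sided ideal of A^U, contained in A^{cU}\<close>
    "in_I U x0 (seq_zero :: nat \<Rightarrow> 'a \<Rightarrow> complex)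
     \<and> (\<forall>F G. in_I U x0 F \<longrightarrow> in_I U x0 G \<longrightarrow> in_I U x0 (seq_add F G))
     \<and> (\<forall>c F. in_I U x0 F \<longrightarrow> in_I U x0 (seq_scale c F))
     \<and> (\<forall>F G. linf F \<longrightarrow> in_I U x0 G \<longrightarrow> in_I U x0 (seq_mult F G) \<and> in_I U x0 (seq_mult G F))
     \<and> (\<forall>F. linf F \<longrightarrow> (\<forall>e>0. \<exists>G. in_I U x0 G \<and> eventually (\<lambda>n. supn (\<lambda>x. F n x - G n x) < e) U)
            \<longrightarrow> in_I U x0 F)
     \<and> (\<forall>F. in_I U x0 F \<longrightarrow> in_AcU U x0 F)
    \<comment> \<open>(2) A^{cU}/I is unital\<close>
     \<and> (\<exists>E. in_AcU U x0 E \<and> (\<forall>F. in_AcU U x0 F \<longrightarrow>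
            in_I U x0 (seq_diff (seq_mult E F) F) \<and> in_I U x0 (seq_diff (seq_mult F E) F)))
    \<comment> \<open>(3) q x0 Delta : A \<rightarrow> A^{cU}/I is well defined and injective\<close>
     \<and> (\<forall>a\<in>C0. in_AcU U x0 (diag a))
     \<and> (\<forall>a\<in>C0. \<forall>b\<in>C0. in_I U x0 (seq_diff (diag a) (diag b)) \<longrightarrow> a = b)
    \<comment> \<open>(4) its image is a two-sided ideal of A^{cU}/I, and it is essential\<close>
     \<and> (\<forall>a\<in>C0. \<forall>F. in_AcU U x0 F \<longrightarrow>
            (\<exists>b\<in>C0. in_I U x0 (seq_diff (seq_mult F (diag a)) (diag b)))
          \<and> (\<exists>b\<in>C0. in_I U x0 (seq_diff (seq_mult (diag a) F) (diag b))))
     \<and> (\<forall>F. in_AcU U x0 F \<longrightarrow> (\<forall>a\<in>C0. in_I U x0 (seq_mult F (diag a))) \<longrightarrow> in_I U x0 F)"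
proof -
  have seq: "U \<le> sequentially"
    using U by (rule nonprincipal_ultrafilter_le_sequentially)
  have balls: "\<And>r. compact (cball x0 r)"
    using proper by blast
  show ?thesis
  proof (intro conjI allI impI ballI)
    show "\<exists>E. in_AcU U x0 E \<and> (\<forall>F. in_AcU U x0 F \<longrightarrow>
        in_I U x0 (seq_diff (seq_mult E F) F) \<and> in_I U x0 (seq_diff (seq_mult F E) F))"
      using in_AcU_cutoff_sequence[OF balls] cutoff_sequence_unit[OF seq balls]
      by (intro exI[of _ "\<lambda>n. cutoff x0 (real n + 1)"])
         (simp add: seq_mult_commute[of _ "\<lambda>n. cutoff x0 (real n + 1)"])
  next
    fix F :: "nat \<Rightarrow> 'a \<Rightarrow> complex"
    assume "linf F" "\<forall>e>0. \<exists>G. in_I U x0 G \<and> eventually (\<lambda>n. supn (\<lambda>x. F n x - G n x) < e) U"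
    then show "in_I U x0 F"
      using in_I_approximable[OF seq] by blast
  qed (use in_I_seq_zero[OF seq] in_I_seq_add[OF seq] in_I_seq_scale[OF seq] in_I_seq_mult[OF seq]
      in_I_imp_in_AcU in_AcU_diag[OF balls] diag_eq_if_in_I[OF nonprincipal_ultrafilter_neq_bot[OF U]]
      mult_diag_equiv_diag[OF U balls] in_I_if_annihilates_C0[OF seq balls] in \<open>simp_all add: seq_mult_commute\<close>)
qed

end
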